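(* Let $(X,q)$ be a complete partial quasi-metric space and let $f:X\to X$ be a mapping such that there is $s\in\mathbb{R}$ with $0\leq s<1$ satisfying $q(f(x),f(y))\leq s\,q(x,y)$ for all $x,y\in X$ (so that $f$ has a unique fixed point $x^*$). If there exists $y\in X$ such that $d_q(f(y),y)=0$, then $d_q(x^*,y)=0$.
   Context: A partial quasi-metric on a nonempty set $X$ is a function $q:X\times X\to[0,\infty)$ such that for all $x,y,z\in X$: (i) $q(x,x)\le q(x,y)$; (ii) $q(x,x)\le q(y,x)$; (iii) $q(x,y)\le q(x,z)+q(z,y)-q(z,z)$; (iv) $q(x,x)=q(x,y)$ and $q(y,y)=q(y,x)$ iff $x=y$. The associated quasi-metric is $d_q(x,y)=q(x,y)-q(x,x)$. A quasi-metric $d$ on $X$ is bicomplete if the metric $d^s(x,y)=\max(d(x,y),d(y,x))$ is complete. $(X,q)$ is complete if $(X,d_q)$ is bicomplete. (It is known that under the contraction hypothesis $f$ has a unique fixed point $x^*$, with $q(x^*,x^* )=0$.) *)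

theory Defs
  imports Complex_Main
begin

definition partial_quasi_metric :: "'a set \<Rightarrow> ('a \<Rightarrow> 'a \<Rightarrow> real) \<Rightarrow> bool" where
  "partial_quasi_metric X q \<longleftrightarrow> X \<noteq> {} \<and>
     (\<forall>x\<in>X. \<forall>y\<in>X. q x y \<ge> 0) \<and>
     (\<forall>x\<in>X. \<forall>y\<in>X. q x x \<le> q x y) \<and>
     (\<forall>x\<in>X. \<forall>y\<in>X. q x x \<le> q y x) \<and>
     (\<forall>x\<in>X. \<forall>y\<in>X. \<forall>z\<in>X. q x y \<le> q x z + q z y - q z z) \<and>
     (\<forall>x\<in>X. \<forall>y\<in>X. (q x x = q x y \<and> q y y = q y x) \<longleftrightarrow> x = y)"

definition assoc_qm :: "('a \<Rightarrow> 'a \<Rightarrow> real) \<Rightarrow> 'a \<Rightarrow> 'a \<Rightarrow> real" where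
  "assoc_qm q x y = q x y - q x x"

definition sym_metric :: "('a \<Rightarrow> 'a \<Rightarrow> real) \<Rightarrow> 'a \<Rightarrow> 'a \<Rightarrow> real" where
  "sym_metric d x y = max (d x y) (d y x)"

definition bicomplete :: "'a set \<Rightarrow> ('a \<Rightarrow> 'a \<Rightarrow> real) \<Rightarrow> bool" where
  "bicomplete X d \<longleftrightarrow>
     (\<forall>u. (\<forall>n. u n \<in> X) \<longrightarrow>
        (\<forall>e>0. \<exists>N. \<forall>m\<ge>N. \<forall>n\<ge>N. sym_metric d (u m) (u n) < e) \<longrightarrow>
        (\<exists>x\<in>X. (\<lambda>n. sym_metric d (u n) x) \<longlonglongrightarrow> 0))"

definition complete_pqm :: "'a set \<Rightarrow> ('a \<Rightarrow> 'a \<Rightarrow> real) \<Rightarrow> bool" where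
  "complete_pqm X q \<longleftrightarrow> partial_quasi_metric X q \<and> bicomplete X (assoc_qm q)"

end

theory Submission
  imports Defs
begin

text \<open>If \<open>d\<^sub>q(f y, y) = 0\<close>, the triangle inequality through \<open>f y\<close> gives
  \<open>q(x\<^sup>*, y) \<le> q(x\<^sup>*, f y) = q(f x\<^sup>*, f y) \<le> s q(x\<^sup>*, y)\<close>, so \<open>q(x\<^sup>*, y) = 0\<close>; likewise
  \<open>q(x\<^sup>*, x\<^sup>*) \<le> s q(x\<^sup>*, x\<^sup>*)\<close> forces \<open>q(x\<^sup>*, x\<^sup>*) = 0\<close>, hence \<open>d\<^sub>q(x\<^sup>*, y) = 0\<close>.\<close>

lemma nonneg_le_scaled_imp_zero:
  fixes a s :: real
  assumes "0 \<le> a" and "s < 1" and "a \<le> s * a"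
  shows "a = 0"
proof -
  have "(1 - s) * a \<le> 0" using assms(3) by (simp add: algebra_simps)
  with assms(1,2) show ?thesis
    by (smt (verit) mult_pos_pos)
qed

lemma pqm_le_through_assoc_qm_zero:
  assumes "partial_quasi_metric X q" and "x \<in> X" and "y \<in> X" and "z \<in> X"
    and "assoc_qm q z y = 0"
  shows "q x y \<le> q x z"
proof -
  have "q x y \<le> q x z + q z y - q z z"
    using assms(1-4) unfolding partial_quasi_metric_def by blast
  with assms(5) show ?thesis by (simp add: assoc_qm_def)
qed

lemma contraction_fixpoint_self_distance_zero:
  assumes "partial_quasi_metric X q" and "s < 1"
    and "\<forall>x\<in>X. \<forall>y\<in>X. q (f x) (f y) \<le> s * q x y"
    and "xs \<in> X" and "f xs = xs"
  shows "q xs xs = 0"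
proof (rule nonneg_le_scaled_imp_zero)
  show "0 \<le> q xs xs" using assms(1,4) by (simp add: partial_quasi_metric_def)
  show "q xs xs \<le> s * q xs xs" using assms(3-5) by metis
qed (use assms(2) in simp)

text \<open>Completeness only guarantees that the fixed point \<open>xs\<close> exists.\<close>

theorem proposition6:
  fixes X :: "'a set" and q :: "'a \<Rightarrow> 'a \<Rightarrow> real" and f :: "'a \<Rightarrow> 'a"
    and s :: real and xs y :: 'a
  assumes "complete_pqm X q"
    and "\<forall>x\<in>X. f x \<in> X"
    and "0 \<le> s" and "s < 1"
    and "\<forall>x\<in>X. \<forall>y\<in>X. q (f x) (f y) \<le> s * q x y"
    and "xs \<in> X" and "f xs = xs"
    and "y \<in> X" and "assoc_qm q (f y) y = 0"
  shows "assoc_qm q xs y = 0"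
proof -
  have pqm: "partial_quasi_metric X q" using assms(1) by (simp add: complete_pqm_def)
  have fy: "f y \<in> X" using assms(2,8) by blast
  have "q xs y = 0"
  proof (rule nonneg_le_scaled_imp_zero)
    show "0 \<le> q xs y" using pqm assms(6,8) by (simp add: partial_quasi_metric_def)
    have "q xs y \<le> q xs (f y)"
      using pqm_le_through_assoc_qm_zero[OF pqm assms(6,8) fy assms(9)] .
    also have "\<dots> \<le> s * q xs y" using assms(5-8) by metis
    finally show "q xs y \<le> s * q xs y" .
  qed (use assms(4) in simp)
  moreover have "q xs xs = 0"
    using contraction_fixpoint_self_distance_zero[OF pqm assms(4,5,6,7)] .
  ultimately show ?thesis by (simp add: assoc_qm_def)
qed

end
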